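(* Let $X=(\mathbb{R}^n,S)$ and $A=(\mathbb{R}^m,T)$ be indecomposable topological Alexander quandles, where $S$ and $T$ are continuous additive automorphisms of $\mathbb{R}^n$ and $\mathbb{R}^m$. Then $H^1_{TC}(X,A)$ is (as a group under pointwise addition) equal to $\{\,x\mapsto F(x)+a \;:\; a\in\mathbb{R}^m,\ F:\mathbb{R}^n\to\mathbb{R}^m \text{ linear},\ FS=TF\,\}$.
   Context: A topological Alexander quandle $(A,T)$ is a topological abelian group $A$ with a continuous group automorphism $T$ and operation $a*b=Ta+(1-T)b$. A quandle is indecomposable if the group generated by the right multiplications $x\mapsto x*y$ acts transitively; for $(\mathbb{R}^n,S)$ this is equivalent to $I-S$ being invertible. For a topological quandle $X$ and topological Alexander quandle $(A,T)$, $H^1_{TC}(X,A)$ is the group (pointwise addition) of continuous quandle homomorphisms $\eta:X\to A$, i.e. continuous maps with $\eta(x*y)=T\eta(x)+(1-T)\eta(y)$ for all $x,y$. *)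

theory Defs
  imports "HOL-Analysis.Analysis"
begin

definition alex_op :: "('a::ab_group_add \<Rightarrow> 'a) \<Rightarrow> 'a \<Rightarrow> 'a \<Rightarrow> 'a" where
  "alex_op T a b = T a + (b - T b)"

definition top_alexander :: "('a::{topological_space, ab_group_add} \<Rightarrow> 'a) \<Rightarrow> bool" where
  "top_alexander T \<longleftrightarrow> continuous_on UNIV T \<and> bij T \<and> (\<forall>a b. T (a + b) = T a + T b)"

inductive_set inner_group :: "('a \<Rightarrow> 'a \<Rightarrow> 'a) \<Rightarrow> ('a \<Rightarrow> 'a) set"
  for op :: "'a \<Rightarrow> 'a \<Rightarrow> 'a" where
  id_in: "id \<in> inner_group op"
| right: "g \<in> inner_group op \<Longrightarrow> (\<lambda>x. op x y) \<circ> g \<in> inner_group op"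
| right_inv: "g \<in> inner_group op \<Longrightarrow> inv (\<lambda>x. op x y) \<circ> g \<in> inner_group op"

definition indecomposable :: "('a \<Rightarrow> 'a \<Rightarrow> 'a) \<Rightarrow> bool" where
  "indecomposable op \<longleftrightarrow> (\<forall>x y. \<exists>g \<in> inner_group op. g x = y)"

text \<open>First topological quandle cohomology: continuous quandle homomorphisms X -> A.\<close>
definition H1_TC :: "('a::topological_space \<Rightarrow> 'a \<Rightarrow> 'a) \<Rightarrow> ('b::{topological_space,ab_group_add} \<Rightarrow> 'b)
    \<Rightarrow> ('a \<Rightarrow> 'b) set" where
  "H1_TC op T = {\<eta>. continuous_on UNIV \<eta> \<and> (\<forall>x y. \<eta> (op x y) = alex_op T (\<eta> x) (\<eta> y))}"

end

theory Submission
  imports Defs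
begin

text \<open>
  Each generator \<open>x \<mapsto> x * y\<close> of the inner group moves every point by a vector in the image
  of \<open>I - S\<close>, so transitivity forces \<open>I - S\<close> to be onto. A homomorphism \<open>\<eta>\<close> normalized by
  \<open>\<psi> = \<eta> - \<eta> 0\<close> satisfies \<open>\<psi> (S x) = T (\<psi> x)\<close> and \<open>\<psi> ((I - S) y) = (I - T) (\<psi> y)\<close>;
  writing arbitrary vectors as \<open>S x\<close> and \<open>(I - S) y\<close> the homomorphism identity becomes
  additivity of \<open>\<psi>\<close>, and a continuous additive map of real vector spaces is linear.
\<close>

lemma additive_continuous_imp_linear:
  fixes f :: "'a::real_normed_vector \<Rightarrow> 'b::real_normed_vector"
  assumes add: "Modules.additive f" and cont: "continuous_on UNIV f"
  shows "linear f"
proof -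
  have scale_nat: "f (real n *\<^sub>R x) = real n *\<^sub>R f x" for n x
    by (induction n) (simp_all add: additive.zero[OF add] additive.add[OF add] scaleR_left_distrib)
  have scale_int: "f (of_int k *\<^sub>R x) = of_int k *\<^sub>R f x" for k x
  proof (cases "k \<ge> 0")
    case True
    then show ?thesis using scale_nat[of "nat k" x] by simp
  next
    case False
    then have k: "of_int k = - real (nat (- k))" by simp
    have "f (of_int k *\<^sub>R x) = - f (real (nat (- k)) *\<^sub>R x)"
      by (simp add: k additive.minus[OF add])
    also have "\<dots> = of_int k *\<^sub>R f x"
      by (simp only: scale_nat k scaleR_minus_left)
    finally show ?thesis .
  qed
  have scale_rat: "f (q *\<^sub>R x) = q *\<^sub>R f x" if "q \<in> \<rat>" for q x
  proof -
    obtain a b where ab: "b > 0" "q = of_int a / of_int b"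
      using Rats_cases'[OF \<open>q \<in> \<rat>\<close>] by metis
    have "of_int b *\<^sub>R f (q *\<^sub>R x) = f ((of_int b * q) *\<^sub>R x)"
      using scale_int[of b "q *\<^sub>R x"] by simp
    also have "\<dots> = of_int a *\<^sub>R f x"
      using ab by (simp add: scale_int)
    finally have "of_int b *\<^sub>R f (q *\<^sub>R x) = of_int a *\<^sub>R f x" .
    then have "f (q *\<^sub>R x) = inverse (of_int b) *\<^sub>R (of_int a *\<^sub>R f x)"
      using ab(1) by (metis of_int_0_less_iff less_irrefl scaleR_scaleR left_inverse scaleR_one)
    then show ?thesis
      using ab(2) by (simp add: divide_inverse mult.commute)
  qed
  have scale: "f (c *\<^sub>R x) = c *\<^sub>R f x" for c x
  proof -
    have "closed {c. f (c *\<^sub>R x) = c *\<^sub>R f x}"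
      by (intro closed_Collect_eq continuous_on_compose2[OF cont] continuous_intros) auto
    moreover have "\<rat> \<subseteq> {c. f (c *\<^sub>R x) = c *\<^sub>R f x}"
      using scale_rat by auto
    ultimately have "closure \<rat> \<subseteq> {c. f (c *\<^sub>R x) = c *\<^sub>R f x}"
      by (rule closure_minimal[rotated])
    then show ?thesis by (auto simp: Rats_closure_real)
  qed
  show ?thesis
    by (rule linearI) (simp_all add: additive.add[OF add] scale)
qed

lemma top_alexander_linear:
  fixes S :: "'a::real_normed_vector \<Rightarrow> 'a"
  assumes "top_alexander S"
  shows "linear S"
proof (rule additive_continuous_imp_linear)
  show "Modules.additive S"
    using assms by (simp add: top_alexander_def additive.intro)
  show "continuous_on UNIV S"
    using assms by (simp add: top_alexander_def)
qed

lemma top_alexander_surj: "top_alexander S \<Longrightarrow> surj S"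
  by (simp add: top_alexander_def bij_def)

lemma alex_op_minus_left:
  assumes "linear S"
  shows "alex_op S x y - x = (y - x) - S (y - x)"
  by (simp add: alex_op_def linear_diff[OF assms] algebra_simps)

lemma surj_alex_op_right:
  assumes "surj S"
  shows "surj (\<lambda>x. alex_op S x y)"
  unfolding surj_def
proof
  fix z
  obtain w where "S w = z - (y - S y)"
    using assms by (metis surjD)
  then have "z = alex_op S w y"
    by (simp add: alex_op_def)
  then show "\<exists>w. z = alex_op S w y" ..
qed

lemma inner_group_displacement:
  fixes S :: "'a::real_vector \<Rightarrow> 'a"
  assumes lin: "linear S" and surj: "surj S" and g: "g \<in> inner_group (alex_op S)"
  shows "g x - x \<in> range (\<lambda>y. y - S y)"
  using g
proof (induction arbitrary: x rule: inner_group.induct)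
  case id_in
  have "id x - x = 0 - S 0"
    by (simp add: linear_0[OF lin])
  then show ?case by blast
next
  case (right g y)
  obtain u where u: "g x - x = u - S u" using right.IH by blast
  have "alex_op S (g x) y - x = (g x - x) + (alex_op S (g x) y - g x)"
    by simp
  also have "\<dots> = (u + (y - g x)) - S (u + (y - g x))"
    unfolding u alex_op_minus_left[OF lin] linear_add[OF lin] by (simp add: algebra_simps)
  finally have "alex_op S (g x) y - x = (u + (y - g x)) - S (u + (y - g x))" .
  then show ?case by auto
next
  case (right_inv g y)
  let ?R = "\<lambda>x. alex_op S x y"
  define w where "w = inv ?R (g x)"
  have "?R w = g x"
    unfolding w_def using surj_alex_op_right[OF surj] by (rule surj_f_inv_f)
  then have "g x - w = (y - w) - S (y - w)"
    using alex_op_minus_left[OF lin, of w y] by simp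
  moreover have "S (w - y) = - S (y - w)"
    using linear_neg[OF lin, of "y - w"] by simp
  ultimately have w: "w - g x = (w - y) - S (w - y)"
    by (simp add: algebra_simps)
  obtain u where u: "g x - x = u - S u" using right_inv.IH by blast
  have "w - x = (g x - x) + (w - g x)"
    by simp
  also have "\<dots> = (u + (w - y)) - S (u + (w - y))"
    unfolding u w linear_add[OF lin] by (simp add: algebra_simps)
  finally show ?case
    unfolding w_def comp_apply by (rule range_eqI)
qed

lemma indecomposable_imp_surj_id_minus:
  fixes S :: "'a::real_vector \<Rightarrow> 'a"
  assumes "linear S" and "surj S" and "indecomposable (alex_op S)"
  shows "surj (\<lambda>y. y - S y)"
  unfolding surj_def
proof
  fix z
  obtain g where "g \<in> inner_group (alex_op S)" "g 0 = z"
    using assms(3) unfolding indecomposable_def by blast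
  then show "\<exists>y. z = y - S y"
    using inner_group_displacement[OF assms(1,2), of g 0] by auto
qed

lemma affine_intertwiner_in_H1_TC:
  fixes F :: "'a::euclidean_space \<Rightarrow> 'b::real_normed_vector"
  assumes "linear T" and "linear F" and "F \<circ> S = T \<circ> F"
  shows "(\<lambda>x. F x + a) \<in> H1_TC (alex_op S) T"
proof -
  have "F (S x) = T (F x)" for x
    using assms(3) by (metis comp_apply)
  then have "F (alex_op S x y) + a = alex_op T (F x + a) (F y + a)" for x y
    by (simp add: alex_op_def linear_add[OF assms(2)] linear_diff[OF assms(2)]
        linear_add[OF assms(1)] linear_diff[OF assms(1)])
  moreover have "continuous_on UNIV (\<lambda>x. F x + a)"
    using assms(2) by (intro continuous_intros linear_continuous_on) (simp add: linear_conv_bounded_linear)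
  ultimately show ?thesis
    by (simp add: H1_TC_def)
qed

lemma H1_TC_normalized_linear:
  fixes S :: "'a::real_normed_vector \<Rightarrow> 'a" and T :: "'b::real_normed_vector \<Rightarrow> 'b"
  assumes linS: "linear S" and surjS: "surj S" and surj_id_minus: "surj (\<lambda>y. y - S y)"
    and linT: "linear T" and \<eta>: "\<eta> \<in> H1_TC (alex_op S) T"
  defines "\<psi> \<equiv> \<lambda>x. \<eta> x - \<eta> 0"
  shows "linear \<psi>" and "\<psi> \<circ> S = T \<circ> \<psi>"
proof -
  have cont: "continuous_on UNIV \<eta>" and "\<eta> (alex_op S x y) = alex_op T (\<eta> x) (\<eta> y)" for x y
    using \<eta> by (simp_all add: H1_TC_def)
  then have hom: "\<psi> (S x + (y - S y)) = T (\<psi> x) + (\<psi> y - T (\<psi> y))" for x y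
    unfolding \<psi>_def alex_op_def by (simp add: linear_diff[OF linT] algebra_simps)
  have "\<psi> 0 = 0" by (simp add: \<psi>_def)
  then have intertwine: "\<psi> (S x) = T (\<psi> x)" and id_minus: "\<psi> (y - S y) = \<psi> y - T (\<psi> y)" for x y
    using hom[of x 0] hom[of 0 y] by (simp_all add: linear_0[OF linS] linear_0[OF linT])
  have "Modules.additive \<psi>"
  proof
    fix u v
    obtain x y where "u = S x" and "v = y - S y"
      using surjS surj_id_minus by (meson surjD)
    then show "\<psi> (u + v) = \<psi> u + \<psi> v"
      using hom[of x y] intertwine[of x] id_minus[of y] by simp
  qed
  moreover have "continuous_on UNIV \<psi>"
    unfolding \<psi>_def by (intro continuous_intros cont)
  ultimately show "linear \<psi>"
    by (rule additive_continuous_imp_linear)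
  show "\<psi> \<circ> S = T \<circ> \<psi>"
    using intertwine by auto
qed

theorem mainTheorem2:
  fixes S :: "real ^ 'n \<Rightarrow> real ^ 'n" and T :: "real ^ 'm \<Rightarrow> real ^ 'm"
  assumes "top_alexander S" and "top_alexander T"
    and "indecomposable (alex_op S)" and "indecomposable (alex_op T)"
  shows "H1_TC (alex_op S) T =
    {(\<lambda>x. F x + a) | F a. linear F \<and> F \<circ> S = T \<circ> F}"
proof
  have linS: "linear S" and surjS: "surj S" and linT: "linear T"
    using assms(1,2) by (simp_all add: top_alexander_linear top_alexander_surj)
  have surj_id_minus: "surj (\<lambda>y. y - S y)"
    using linS surjS assms(3) by (rule indecomposable_imp_surj_id_minus)
  show "H1_TC (alex_op S) T \<subseteq> {(\<lambda>x. F x + a) | F a. linear F \<and> F \<circ> S = T \<circ> F}"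
  proof
    fix \<eta> assume "\<eta> \<in> H1_TC (alex_op S) T"
    from H1_TC_normalized_linear[OF linS surjS surj_id_minus linT this]
    show "\<eta> \<in> {(\<lambda>x. F x + a) | F a. linear F \<and> F \<circ> S = T \<circ> F}"
      by (intro CollectI exI[of _ "\<lambda>x. \<eta> x - \<eta> 0"] exI[of _ "\<eta> 0"]) simp
  qed
  show "{(\<lambda>x. F x + a) | F a. linear F \<and> F \<circ> S = T \<circ> F} \<subseteq> H1_TC (alex_op S) T"
    using affine_intertwiner_in_H1_TC[OF linT] by blast
qed

end
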